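(* For any distribution of $H$ on $(0,1)$, let $Q_\bullet=(Q_k)_{k\ge0}$ be a Markov chain on $\{1,2,\dots\}$ with transition probabilities $p_{m,n}=\binom{n-1}{m-1}\mu_{n-m,m}$ for $1\le m\le n$ (and $0$ for $n<m$). Then $Q_\bullet$ has the transition mechanism of a Galton–Watson branching process in a random environment in which, at each generation $k$, every individual present independently has a number of offspring with the geometric$(1-H_k)$ distribution on $\{1,2,\dots\}$ (i.e. $P(\text{offspring}=r\mid H_k)=H_k^{r-1}(1-H_k)$), with $H_0,H_1,\dots$ i.i.d. copies of $H$. Equivalently, for every $k\ge0$, $m\ge1$ and $|z|\le1$, $$E\big(z^{Q_{k+1}-Q_k}\,\big|\,Q_k=m\big)=E\Big(\frac{1-H}{1-Hz}\Big)^m .$$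
   Context: $H$ is a random variable with values in $(0,1)$ and $\mu_{i,j}:=E[H^i(1-H)^j]$. *)

theory Defs
  imports "HOL-Probability.Probability"
begin

definition mu :: "'a measure \<Rightarrow> ('a \<Rightarrow> real) \<Rightarrow> nat \<Rightarrow> nat \<Rightarrow> real" where
  "mu M H i j = (\<integral>\<omega>. H \<omega> ^ i * (1 - H \<omega>) ^ j \<partial>M)"

definition trans_p :: "'a measure \<Rightarrow> ('a \<Rightarrow> real) \<Rightarrow> nat \<Rightarrow> nat \<Rightarrow> real" where
  "trans_p M H m n = (if m \<le> n then real ((n - 1) choose (m - 1)) * mu M H (n - m) m else 0)"

definition geom1_pmf :: "real \<Rightarrow> nat pmf" where
  "geom1_pmf h = map_pmf Suc (geometric_pmf (1 - h))"

fun offspring_sum :: "real \<Rightarrow> nat \<Rightarrow> nat pmf" where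
  "offspring_sum h 0 = return_pmf 0"
| "offspring_sum h (Suc m) =
     bind_pmf (offspring_sum h m) (\<lambda>x. map_pmf (\<lambda>y. x + y) (geom1_pmf h))"

end

theory Submission
  imports Defs
begin

text \<open>Conditionally on \<open>H = h\<close>, each offspring count is \<open>1\<close> plus a geometric number of
  failures, so the total offspring of \<open>m\<close> individuals is \<open>m\<close> plus a negative binomial
  variable with parameters \<open>m\<close> and \<open>1 - h\<close>. Averaging its probabilities over \<open>H\<close> gives
  \<open>p\<^sub>m\<^sub>,\<^sub>n\<close>. Its generating function is \<open>((1 - h) / (1 - h z))^m\<close> by the negative
  binomial series, and since the weights are nonnegative with total mass one, the series
  may be integrated termwise over \<open>H\<close>.\<close>

lemma offspring_sum_eq_neg_binomial:
  "offspring_sum h m = map_pmf (\<lambda>k. k + m) (neg_binomial_pmf m (1 - h))"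
proof (induction m)
  case 0
  then show ?case by simp
next
  case (Suc m)
  show ?case
    unfolding offspring_sum.simps Suc neg_binomial_pmf_Suc geom1_pmf_def
    by (simp add: pair_pmf_def map_pmf_def bind_assoc_pmf bind_return_pmf bind_return_pmf'
        algebra_simps bind_commute_pmf[of "geometric_pmf (1 - h)"])
qed

lemma pmf_offspring_sum_add:
  "pmf (offspring_sum h m) (m + j) = pmf (neg_binomial_pmf m (1 - h)) j"
  unfolding offspring_sum_eq_neg_binomial add.commute[of m j]
  by (rule pmf_map_inj') (auto simp: inj_def)

lemma pmf_offspring_sum_less:
  assumes "n < m"
  shows "pmf (offspring_sum h m) n = 0"
proof -
  have "n \<notin> set_pmf (offspring_sum h m)"
    using assms by (auto simp: offspring_sum_eq_neg_binomial)
  then show ?thesis by (simp add: set_pmf_iff)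
qed

lemma negative_binomial_series:
  fixes w :: complex
  assumes "norm w < 1"
  shows "(\<lambda>j. of_nat ((m + j - 1) choose j) * w ^ j) sums inverse ((1 - w) ^ m)"
proof (cases "m = 0")
  case True
  \<comment> \<open>truncated subtraction: the coefficients \<open>(j - 1) choose j\<close> vanish except at \<open>j = 0\<close>\<close>
  have "(\<lambda>j. of_nat ((m + j - 1) choose j) * w ^ j) = (\<lambda>j. if j = 0 then 1 else 0)"
    using True by (auto simp: fun_eq_iff)
  then show ?thesis
    using True sums_single[of 0 "\<lambda>_. 1 :: complex"] by simp
next
  case False
  have "(\<lambda>j. (-1) ^ j * ((of_nat m + of_nat j - 1) gchoose j) * (-w) ^ j)
          sums (1 + (-w)) powr (- of_nat m)"
    by (rule one_plus_neg_powr_powser) (use assms in simp)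
  moreover have "(1 + (-w)) powr (- of_nat m) = inverse ((1 - w) ^ m)"
  proof -
    have "1 - w \<noteq> 0" using assms by auto
    then show ?thesis by (simp add: powr_minus powr_nat')
  qed
  moreover have "(-1) ^ j * ((of_nat m + of_nat j - 1) gchoose j) * (-w) ^ j
      = of_nat ((m + j - 1) choose j) * w ^ j" for j
  proof -
    have "(of_nat m + of_nat j - 1 :: complex) = of_nat (m + j - 1)"
      using False by (simp add: of_nat_diff)
    then have "((of_nat m + of_nat j - 1 :: complex) gchoose j) = of_nat ((m + j - 1) choose j)"
      by (simp add: binomial_gbinomial)
    moreover have "(-1 :: complex) ^ j * (-w) ^ j = w ^ j"
      by (simp add: power_minus_mult[symmetric] power_mult_distrib[symmetric])
    ultimately show ?thesis by (metis mult.commute mult.left_commute)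
  qed
  ultimately show ?thesis by (simp only:)
qed

lemma neg_binomial_pmf_generating_function:
  fixes z :: complex
  assumes p: "p \<in> {0<..1}" and z: "norm ((1 - p) *\<^sub>R z) < 1"
  shows "(\<lambda>j. pmf (neg_binomial_pmf m p) j *\<^sub>R z ^ j)
           sums ((of_real p / (1 - of_real (1 - p) * z)) ^ m)"
proof -
  have "(\<lambda>j. of_real p ^ m * (of_nat ((m + j - 1) choose j) * (of_real (1 - p) * z) ^ j))
          sums (of_real p ^ m * inverse ((1 - of_real (1 - p) * z) ^ m))"
    using z by (intro sums_mult negative_binomial_series) (simp add: scaleR_conv_of_real)
  moreover have "pmf (neg_binomial_pmf m p) j *\<^sub>R z ^ j
      = of_real p ^ m * (of_nat ((m + j - 1) choose j) * (of_real (1 - p) * z) ^ j)" for j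
    using p by (simp add: pmf_neg_binomial scaleR_conv_of_real power_mult_distrib add.commute)
  ultimately show ?thesis
    by (simp only: divide_inverse power_mult_distrib power_inverse)
qed

lemma neg_binomial_pmf_sums_1:
  assumes "p \<in> {0<..1}"
  shows "pmf (neg_binomial_pmf m p) sums 1"
proof -
  have "(\<lambda>j. pmf (neg_binomial_pmf m p) j *\<^sub>R (1 :: complex) ^ j) sums 1"
    using neg_binomial_pmf_generating_function[OF assms, of 1 m] assms by simp
  then show ?thesis
    by (simp flip: sums_of_real_iff[where 'a = complex] add: scaleR_conv_of_real)
qed

lemma neg_binomial_pmf_generating_function_unit_disc:
  fixes z :: complex
  assumes h: "0 \<le> h" "h < 1" and z: "norm z \<le> 1"
  shows "(\<lambda>j. pmf (neg_binomial_pmf m (1 - h)) j *\<^sub>R z ^ j)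
           sums (((1 - of_real h) / (1 - of_real h * z)) ^ m)"
proof -
  have "h * norm z < 1"
    using h z mult_left_le[of "norm z" h] by auto
  then show ?thesis
    using neg_binomial_pmf_generating_function[of "1 - h" z m] h by simp
qed

lemma measurable_pmf_neg_binomial:
  assumes [measurable]: "q \<in> borel_measurable M"
    and q: "\<And>\<omega>. \<omega> \<in> space M \<Longrightarrow> q \<omega> \<in> {0<..1}"
  shows "(\<lambda>\<omega>. pmf (neg_binomial_pmf m (q \<omega>)) j) \<in> borel_measurable M"
proof (rule measurable_cong[THEN iffD2])
  show "\<omega> \<in> space M \<Longrightarrow> pmf (neg_binomial_pmf m (q \<omega>)) j
          = real ((j + m - 1) choose j) * q \<omega> ^ m * (1 - q \<omega>) ^ j" for \<omega>
    using q by (rule pmf_neg_binomial)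
qed measurable

lemma trans_p_eq_integral_neg_binomial:
  assumes H: "\<And>\<omega>. \<omega> \<in> space M \<Longrightarrow> 0 \<le> H \<omega> \<and> H \<omega> < 1" and m: "1 \<le> m"
  shows "trans_p M H m (m + j) = (\<integral>\<omega>. pmf (neg_binomial_pmf m (1 - H \<omega>)) j \<partial>M)"
proof -
  have "(m + j - 1) choose (m - 1) = (j + m - 1) choose j"
    using m binomial_symmetric[of "m - 1" "m + j - 1"] by (simp add: add.commute)
  then have "trans_p M H m (m + j) = real ((j + m - 1) choose j) * mu M H j m"
    by (simp add: trans_p_def)
  also have "\<dots> = (\<integral>\<omega>. real ((j + m - 1) choose j) * (H \<omega> ^ j * (1 - H \<omega>) ^ m) \<partial>M)"
    by (simp add: mu_def)
  also have "\<dots> = (\<integral>\<omega>. pmf (neg_binomial_pmf m (1 - H \<omega>)) j \<partial>M)"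
    using H by (intro Bochner_Integration.integral_cong refl) (simp add: pmf_neg_binomial mult_ac)
  finally show ?thesis .
qed

lemma trans_p_eq_integral_offspring_sum:
  assumes H: "\<And>\<omega>. \<omega> \<in> space M \<Longrightarrow> 0 \<le> H \<omega> \<and> H \<omega> < 1" and m: "1 \<le> m"
  shows "trans_p M H m n = (\<integral>\<omega>. pmf (offspring_sum (H \<omega>) m) n \<partial>M)"
proof (cases "n < m")
  case True
  then show ?thesis by (simp add: trans_p_def pmf_offspring_sum_less)
next
  case False
  then obtain j where "n = m + j" using le_Suc_ex not_less by blast
  then show ?thesis
    using H m by (simp add: pmf_offspring_sum_add trans_p_eq_integral_neg_binomial)
qed

lemma sums_integral_probability_weights:
  fixes c :: "nat \<Rightarrow> 'b :: {banach, second_countable_topology}"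
  assumes "prob_space M"
    and [measurable]: "\<And>j. g j \<in> borel_measurable M"
    and g_nonneg: "\<And>j \<omega>. \<omega> \<in> space M \<Longrightarrow> 0 \<le> g j \<omega>"
    and g_sums: "\<And>\<omega>. \<omega> \<in> space M \<Longrightarrow> (\<lambda>j. g j \<omega>) sums 1"
    and c: "\<And>j. norm (c j) \<le> 1"
  shows "(\<lambda>j. (\<integral>\<omega>. g j \<omega> \<partial>M) *\<^sub>R c j) sums (\<integral>\<omega>. (\<Sum>j. g j \<omega> *\<^sub>R c j) \<partial>M)"
proof -
  interpret prob_space M by fact
  have g_le: "(\<Sum>j<n. g j \<omega>) \<le> 1" if "\<omega> \<in> space M" for n \<omega>
    using sum_le_suminf[of "\<lambda>j. g j \<omega>" "{..<n}"] g_sums[OF that] g_nonneg[OF that]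
    by (auto simp: sums_iff)
  have g_le_1: "g j \<omega> \<le> 1" if "\<omega> \<in> space M" for j \<omega>
  proof -
    have "g j \<omega> \<le> (\<Sum>i<Suc j. g i \<omega>)"
      using g_nonneg[OF that] by (intro member_le_sum) auto
    also have "\<dots> \<le> 1"
      using g_le[OF that] .
    finally show ?thesis .
  qed
  have g_int: "integrable M (g j)" for j
    using g_nonneg g_le_1 by (intro integrable_const_bound[where B = 1] AE_I2) auto
  have g_summable: "summable (\<lambda>j. \<integral>\<omega>. g j \<omega> \<partial>M)"
  proof (rule summableI_nonneg_bounded[where x = 1])
    show "0 \<le> integral\<^sup>L M (g j)" for j
      using g_nonneg by (intro integral_nonneg_AE AE_I2)
    show "(\<Sum>j<n. integral\<^sup>L M (g j)) \<le> 1" for n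
    proof -
      have "(\<Sum>j<n. integral\<^sup>L M (g j)) = (\<integral>\<omega>. (\<Sum>j<n. g j \<omega>) \<partial>M)"
        using g_int by simp
      also have "\<dots> \<le> (\<integral>\<omega>. 1 \<partial>M)"
        using g_int g_le by (intro integral_mono) auto
      finally show ?thesis by (simp add: prob_space.prob_space[OF assms(1)])
    qed
  qed
  have norm_le: "norm (g j \<omega> *\<^sub>R c j) \<le> g j \<omega>" if "\<omega> \<in> space M" for j \<omega>
    using g_nonneg[OF that] c[of j] by (simp add: mult_left_le)
  have "(\<lambda>j. \<integral>\<omega>. g j \<omega> *\<^sub>R c j \<partial>M) sums (\<integral>\<omega>. (\<Sum>j. g j \<omega> *\<^sub>R c j) \<partial>M)"
  proof (rule sums_integral)
    show "integrable M (\<lambda>\<omega>. g j \<omega> *\<^sub>R c j)" for j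
      using g_int by simp
    show "AE \<omega> in M. summable (\<lambda>j. norm (g j \<omega> *\<^sub>R c j))"
    proof (rule AE_I2)
      fix \<omega> assume "\<omega> \<in> space M"
      then show "summable (\<lambda>j. norm (g j \<omega> *\<^sub>R c j))"
        using norm_le by (intro summable_comparison_test'[OF sums_summable[OF g_sums]]) auto
    qed
    have "norm (\<integral>\<omega>. norm (g j \<omega> *\<^sub>R c j) \<partial>M) \<le> (\<integral>\<omega>. g j \<omega> \<partial>M)" for j
    proof -
      have "(\<integral>\<omega>. norm (g j \<omega> *\<^sub>R c j) \<partial>M) \<le> (\<integral>\<omega>. g j \<omega> \<partial>M)"
        using g_int norm_le by (intro integral_mono integrable_norm integrable_scaleR_left) auto
      then show ?thesis by simp
    qed
    with g_summable show "summable (\<lambda>j. \<integral>\<omega>. norm (g j \<omega> *\<^sub>R c j) \<partial>M)"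
      by (rule summable_comparison_test'[where N = 0])
  qed
  then show ?thesis
    using g_int by simp
qed

theorem mainTheorem4:
  fixes M :: "'a measure" and H :: "'a \<Rightarrow> real"
  assumes "prob_space M"
    and "H \<in> borel_measurable M"
    and "\<forall>\<omega>\<in>space M. 0 < H \<omega> \<and> H \<omega> < 1"
  shows "(\<forall>m n. 1 \<le> m \<longrightarrow>
            trans_p M H m n = (\<integral>\<omega>. pmf (offspring_sum (H \<omega>) m) n \<partial>M))
       \<and> (\<forall>m (z::complex). 1 \<le> m \<longrightarrow> norm z \<le> 1 \<longrightarrow>
            (\<lambda>j. complex_of_real (trans_p M H m (m + j)) * z ^ j) sums
              (\<integral>\<omega>. ((1 - complex_of_real (H \<omega>)) / (1 - complex_of_real (H \<omega>) * z)) ^ m \<partial>M))"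
proof (intro conjI allI impI)
  have H: "\<And>\<omega>. \<omega> \<in> space M \<Longrightarrow> 0 \<le> H \<omega> \<and> H \<omega> < 1"
    using assms(3) by auto
  show "trans_p M H m n = (\<integral>\<omega>. pmf (offspring_sum (H \<omega>) m) n \<partial>M)" if "1 \<le> m" for m n
    using H that by (rule trans_p_eq_integral_offspring_sum)
  fix m :: nat and z :: complex assume m: "1 \<le> m" and z: "norm z \<le> 1"
  have "(\<lambda>j. (\<integral>\<omega>. pmf (neg_binomial_pmf m (1 - H \<omega>)) j \<partial>M) *\<^sub>R z ^ j)
      sums (\<integral>\<omega>. (\<Sum>j. pmf (neg_binomial_pmf m (1 - H \<omega>)) j *\<^sub>R z ^ j) \<partial>M)"
  proof (rule sums_integral_probability_weights)
    show "(\<lambda>\<omega>. pmf (neg_binomial_pmf m (1 - H \<omega>)) j) \<in> borel_measurable M" for j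
      using assms(2) H by (intro measurable_pmf_neg_binomial) auto
  qed (use assms(1) H z in \<open>auto intro: neg_binomial_pmf_sums_1 simp: norm_power power_le_one\<close>)
  also have "\<dots> = (\<integral>\<omega>. ((1 - complex_of_real (H \<omega>)) / (1 - complex_of_real (H \<omega>) * z)) ^ m \<partial>M)"
    using H z neg_binomial_pmf_generating_function_unit_disc
    by (intro Bochner_Integration.integral_cong refl) (simp add: sums_iff)
  finally show "(\<lambda>j. complex_of_real (trans_p M H m (m + j)) * z ^ j) sums
      (\<integral>\<omega>. ((1 - complex_of_real (H \<omega>)) / (1 - complex_of_real (H \<omega>) * z)) ^ m \<partial>M)"
    using H m by (simp add: trans_p_eq_integral_neg_binomial scaleR_conv_of_real)
qed

end
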